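(* Let $k\ge2$ and let $h$ be a positive integer. For $m\ge1$ put $g(m,h)=\sum_{d\mid m} c_d(h)/d$, and let $D_h(s)=\sum_{m\ge1} d_{k-1}(m)g(m,h)m^{-s}$. Then $D_h(s)$ converges absolutely for $\operatorname{Re}s>1$, and $\zeta(s)^{-(k-1)}D_h(s)$ extends to a holomorphic function on $\operatorname{Re}s>\frac12$ which is non-zero at $s=1$. Consequently $D_h(s)$ extends meromorphically to $\operatorname{Re}s>\frac12$, with its only pole at $s=1$, of order exactly $k-1$.
   Context: $c_d(h)=\sum_{a \bmod d,\ \gcd(a,d)=1} e(ah/d)$ is the Ramanujan sum, with $e(t)=e^{2\pi i t}$; $d_{k-1}(m)$ is the number of ordered $(k-1)$-tuples of positive integers with product $m$; $\zeta$ is the Riemann zeta function. *)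

theory Defs
  imports "HOL-Complex_Analysis.Complex_Analysis"
begin

definition e_fun :: "real \<Rightarrow> complex" where
  "e_fun t = exp (2 * of_real pi * \<i> * of_real t)"

definition ramanujan_sum :: "nat \<Rightarrow> int \<Rightarrow> complex" where
  "ramanujan_sum d h = (\<Sum>a\<in>{a. a < d \<and> coprime a d}. e_fun (real a * real_of_int h / real d))"

definition divisor_fun :: "nat \<Rightarrow> nat \<Rightarrow> nat" where
  "divisor_fun j m = card {xs :: nat list. length xs = j \<and> (\<forall>x\<in>set xs. 0 < x) \<and> prod_list xs = m}"

definition g_fun :: "nat \<Rightarrow> int \<Rightarrow> complex" where
  "g_fun m h = (\<Sum>d\<in>{d. d dvd m}. ramanujan_sum d h / of_nat d)"

text \<open>The m-th coefficient term of D_h(s) (the m = 0 term vanishes since d_{k-1}(0) = 0).\<close>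
definition D_term :: "nat \<Rightarrow> int \<Rightarrow> complex \<Rightarrow> nat \<Rightarrow> complex" where
  "D_term k h s m = of_nat (divisor_fun (k - 1) m) * g_fun m h / (of_nat m powr s)"

definition D_series :: "nat \<Rightarrow> int \<Rightarrow> complex \<Rightarrow> complex" where
  "D_series k h s = (\<Sum>m. D_term k h s m)"

text \<open>Riemann zeta as its Dirichlet series; only used for Re s > 1.\<close>
definition zeta_dirichlet :: "complex \<Rightarrow> complex" where
  "zeta_dirichlet s = (\<Sum>n. if n = 0 then 0 else 1 / (of_nat n powr s))"

end

theory Submission
  imports Defs "HOL-Number_Theory.Totient"
begin

text \<open>
  By the closed form \<open>g(m,h) = \<Sum> \<phi>(e)/e\<close>, summed over the divisors \<open>e\<close> of \<open>m\<close> with \<open>m/e\<close>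
  dividing \<open>h\<close>, the coefficients \<open>d_{k-1}(m) g(m,h)\<close> of \<open>D_h\<close> are non-negative, multiplicative and at
  most \<open>h d_{k-1}(m)\<close>; hence \<open>D_h(s)\<close> converges absolutely for \<open>Re s > 1\<close> and is an Euler
  product there.  For \<open>p\<close> not dividing \<open>h\<close> and \<open>a \<ge> 1\<close> one has \<open>g(p^a,h) = 1 - 1/p\<close>, so the
  Euler factor of \<open>\<zeta>(s)^{-(k-1)} D_h(s)\<close> at \<open>p\<close> is \<open>1 + ((1 - p^{-s})^{k-1} - 1)/p = 1 + O(p^{-3/2})\<close>,
  uniformly on \<open>Re s \<ge> 1/2\<close>.  The product of these factors converges locally uniformly to a
  holomorphic function on \<open>Re s > 1/2\<close>; it does not vanish at \<open>s = 1\<close>, where the Euler factor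
  of \<open>D_h\<close> is a real number \<open>\<ge> 1\<close>.  Finally \<open>(s - 1) \<zeta>(s) - 1\<close> is the sum of the second
  differences \<open>(s - 1) n^{-s} - n^{1-s} + (n+1)^{1-s} = O(|s| |s - 1| n^{-Re s - 1})\<close>, which continues
  \<open>(s - 1) \<zeta>(s)\<close> holomorphically to \<open>Re s > 0\<close> with value \<open>1\<close> at \<open>s = 1\<close>; this exhibits the pole
  of \<open>D_h\<close> of order exactly \<open>k - 1\<close>.
\<close>

section \<open>Multiplicative functions and Euler products\<close>

definition multiplicative :: "(nat \<Rightarrow> 'a::comm_semiring_1) \<Rightarrow> bool" where
  "multiplicative f \<longleftrightarrow> f 1 = 1 \<and> (\<forall>m n. coprime m n \<longrightarrow> f (m * n) = f m * f n)"

lemma multiplicativeI: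
  assumes "f 1 = 1" and "\<And>m n. coprime m n \<Longrightarrow> m > 0 \<Longrightarrow> n > 0 \<Longrightarrow> f (m * n) = f m * f n"
  shows "multiplicative f"
  unfolding multiplicative_def
proof (intro conjI allI impI)
  fix m n :: nat assume mn: "coprime m n"
  show "f (m * n) = f m * f n"
  proof (cases "m = 0 \<or> n = 0")
    case True
    with mn have "m = 1 \<or> n = 1" by auto
    with assms(1) show ?thesis by auto
  qed (use assms(2) mn in auto)
qed (fact assms(1))

lemma multiplicative_mult:
  "multiplicative f \<Longrightarrow> multiplicative g \<Longrightarrow> multiplicative (\<lambda>n. f n * g n)"
  by (simp add: multiplicative_def mult_ac)

lemma multiplicative_of_real:
  "multiplicative f \<Longrightarrow> multiplicative (\<lambda>n. of_real (f n) :: 'a::{real_algebra_1,comm_semiring_1})"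
  by (simp add: multiplicative_def)

lemma multiplicative_complex_powr: "multiplicative (\<lambda>n. of_nat n powr s :: complex)"
  by (simp add: multiplicative_def powr_times_real)

lemma multiplicative_real_powr: "multiplicative (\<lambda>n. real n powr \<sigma>)"
  by (simp add: multiplicative_def powr_mult)

lemma power_powr_real: "(x :: real) \<ge> 0 \<Longrightarrow> (x ^ a) powr \<sigma> = (x powr \<sigma>) ^ a"
  by (induction a) (simp_all add: powr_mult)

lemma of_nat_power_powr_complex: "(of_nat p ^ a :: complex) powr s = (of_nat p powr s) ^ a"
  by (induction a) (simp_all add: powr_times_real)

lemma norm_of_nat_powr: "norm (of_nat n powr s :: complex) = real n powr Re s"
  using norm_powr_real_powr[of "of_nat n" s] by simp

lemma norm_of_nat_powr_less_1:
  assumes "n > 1" "Re s > 0"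
  shows "norm (of_nat n powr (-s) :: complex) < 1"
  unfolding norm_of_nat_powr using assms by (intro powr_less_one) auto

lemma multiplicative_prod_prime_powers:
  assumes f: "multiplicative f" and P: "finite P" "\<And>p. p \<in> P \<Longrightarrow> prime p"
  shows "f (\<Prod>p\<in>P. p ^ e p) = (\<Prod>p\<in>P. f (p ^ e p))"
  using P
proof (induction P rule: finite_induct)
  case empty
  thus ?case using f by (simp add: multiplicative_def)
next
  case (insert q P)
  have "coprime (q ^ e q) (\<Prod>p\<in>P. p ^ e p)"
  proof (cases "e q = 0")
    case False
    have "coprime q (p ^ e p)" if "p \<in> P" for p
      using insert that by (auto intro: primes_coprime)
    thus ?thesis using False by (auto intro!: prod_coprime_right)
  qed simp
  thus ?case using insert f unfolding multiplicative_def by simp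
qed

lemma sum_divisors_coprime_mult:
  fixes F :: "nat \<Rightarrow> 'a::comm_monoid_add"
  assumes mn: "coprime m n" and "m > 0" "n > 0"
  shows "(\<Sum>d | d dvd m * n. F d) = (\<Sum>d1 | d1 dvd m. \<Sum>d2 | d2 dvd n. F (d1 * d2))"
proof -
  let ?D = "{d. d dvd m} \<times> {d. d dvd n}"
  have inj: "inj_on (\<lambda>(x, y). x * y) ?D"
  proof (rule inj_onI, clarsimp)
    fix a1 b1 a2 b2 :: nat
    assume h: "a1 dvd m" "b1 dvd n" "a2 dvd m" "b2 dvd n" "a1 * b1 = a2 * b2"
    have "a1 dvd a2"
      using h(5) coprime_divisors[OF h(1) h(4) mn] by (metis coprime_dvd_mult_left_iff dvd_triv_left)
    moreover have "a2 dvd a1"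
      using h(5) coprime_divisors[OF h(3) h(2) mn] by (metis coprime_dvd_mult_left_iff dvd_triv_left)
    ultimately have "a1 = a2" by (rule dvd_antisym)
    moreover have "a1 \<noteq> 0" using h(1) assms(2) by auto
    ultimately show "a1 = a2 \<and> b1 = b2" using h(5) by simp
  qed
  have image: "(\<lambda>(x, y). x * y) ` ?D = {d. d dvd m * n}"
    by (auto intro: mult_dvd_mono dest: division_decomp)
  have "(\<Sum>d1 | d1 dvd m. \<Sum>d2 | d2 dvd n. F (d1 * d2)) = (\<Sum>(x, y)\<in>?D. F (x * y))"
    by (rule sum.cartesian_product)
  also have "\<dots> = (\<Sum>d | d dvd m * n. F d)"
    by (subst image[symmetric], subst sum.reindex[OF inj]) (simp add: case_prod_unfold)
  finally show ?thesis ..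
qed

definition smooth_numbers :: "nat set \<Rightarrow> nat set" where
  "smooth_numbers P = {n. n > 0 \<and> prime_factors n \<subseteq> P}"

lemma smooth_numbers_primes_less:
  assumes "0 < n" "n < N"
  shows "n \<in> smooth_numbers {p. prime p \<and> p < N}"
proof -
  have "p < N" if "p \<in> prime_factors n" for p
    using that assms dvd_imp_le[of p n] by (auto simp: in_prime_factors_iff)
  thus ?thesis using assms by (auto simp: smooth_numbers_def in_prime_factors_iff)
qed

lemma bij_betw_prime_powers_smooth_numbers:
  assumes P: "finite P" "\<And>p. p \<in> P \<Longrightarrow> prime p"
  shows "bij_betw (\<lambda>\<alpha>. \<Prod>p\<in>P. p ^ \<alpha> p) (PiE P (\<lambda>_. UNIV)) (smooth_numbers P)"
proof -
  define \<phi> where "\<phi> \<alpha> = (\<Prod>p\<in>P. p ^ \<alpha> p)" for \<alpha> :: "nat \<Rightarrow> nat"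
  have mult: "multiplicity q (\<phi> \<alpha>) = (if q \<in> P then \<alpha> q else 0)" if "prime q" for q \<alpha>
    unfolding \<phi>_def using P that by (intro multiplicity_prod_prime_powers) auto
  have "bij_betw \<phi> (PiE P (\<lambda>_. UNIV)) (smooth_numbers P)"
  proof (rule bij_betwI')
    fix \<alpha> \<beta> :: "nat \<Rightarrow> nat" assume \<alpha>\<beta>: "\<alpha> \<in> PiE P (\<lambda>_. UNIV)" "\<beta> \<in> PiE P (\<lambda>_. UNIV)"
    show "\<phi> \<alpha> = \<phi> \<beta> \<longleftrightarrow> \<alpha> = \<beta>"
    proof
      assume eq: "\<phi> \<alpha> = \<phi> \<beta>"
      have "\<alpha> p = \<beta> p" for p
      proof (cases "p \<in> P")
        case True
        thus ?thesis using eq mult[of p \<alpha>] mult[of p \<beta>] P(2) by simp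
      next
        case False
        thus ?thesis using PiE_arb[OF \<alpha>\<beta>(1) False] PiE_arb[OF \<alpha>\<beta>(2) False] by simp
      qed
      thus "\<alpha> = \<beta>" by (simp add: fun_eq_iff)
    qed simp
  next
    fix \<alpha> :: "nat \<Rightarrow> nat"
    have "\<phi> \<alpha> > 0"
      unfolding \<phi>_def using P by (intro prod_pos) (auto dest: prime_gt_0_nat)
    moreover have "prime_factors (\<phi> \<alpha>) \<subseteq> P"
      using mult by (auto simp: prime_factors_multiplicity split: if_splits)
    ultimately show "\<phi> \<alpha> \<in> smooth_numbers P" by (simp add: smooth_numbers_def)
  next
    fix n assume "n \<in> smooth_numbers P"
    hence n: "n > 0" "prime_factors n \<subseteq> P" by (auto simp: smooth_numbers_def)
    define \<alpha> where "\<alpha> = restrict (\<lambda>p. multiplicity p n) P"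
    have "\<phi> \<alpha> = (\<Prod>p\<in>P. p ^ multiplicity p n)"
      unfolding \<phi>_def \<alpha>_def by simp
    also have "\<dots> = (\<Prod>p\<in>prime_factors n. p ^ multiplicity p n)"
      by (rule prod.mono_neutral_right[OF P(1) n(2)])
         (use P(2) in \<open>auto simp: prime_factors_multiplicity\<close>)
    also have "\<dots> = n" by (rule prime_factorization_nat[OF n(1), symmetric])
    finally have "n = \<phi> \<alpha>" ..
    moreover have "\<alpha> \<in> PiE P (\<lambda>_. UNIV)" by (simp add: \<alpha>_def)
    ultimately show "\<exists>\<alpha>\<in>PiE P (\<lambda>_. UNIV). n = \<phi> \<alpha>" by blast
  qed
  thus ?thesis unfolding \<phi>_def .
qed

lemma euler_product_smooth_numbers:
  fixes f :: "nat \<Rightarrow> 'a::{real_normed_field,banach,second_countable_topology}"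
  assumes f: "multiplicative f" and P: "finite P" "\<And>p. p \<in> P \<Longrightarrow> prime p"
    and local: "\<And>p. p \<in> P \<Longrightarrow> summable (\<lambda>a. norm (f (p ^ a)))"
  shows "Infinite_Set_Sum.abs_summable_on f (smooth_numbers P)"
    and "infsetsum f (smooth_numbers P) = (\<Prod>p\<in>P. \<Sum>a. f (p ^ a))"
proof -
  note bij = bij_betw_prime_powers_smooth_numbers[OF P]
  have local': "Infinite_Set_Sum.abs_summable_on (\<lambda>a. f (p ^ a)) UNIV" if "p \<in> P" for p
    using local[OF that] by (simp add: abs_summable_on_nat_iff')
  have f_prod: "f (\<Prod>p\<in>P. p ^ \<alpha> p) = (\<Prod>p\<in>P. f (p ^ \<alpha> p))" for \<alpha>
    by (rule multiplicative_prod_prime_powers[OF f P])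
  have "Infinite_Set_Sum.abs_summable_on (\<lambda>\<alpha>. \<Prod>p\<in>P. f (p ^ \<alpha> p)) (PiE P (\<lambda>_. UNIV))"
    by (rule abs_summable_on_prod_PiE[where f = "\<lambda>p a. f (p ^ a)"]) (use P local' in auto)
  thus "Infinite_Set_Sum.abs_summable_on f (smooth_numbers P)"
    using abs_summable_on_reindex_bij_betw[OF bij, of f] f_prod by simp
  have "infsetsum f (smooth_numbers P) = infsetsum (\<lambda>\<alpha>. \<Prod>p\<in>P. f (p ^ \<alpha> p)) (PiE P (\<lambda>_. UNIV))"
    using infsetsum_reindex_bij_betw[OF bij, of f] f_prod by simp
  also have "\<dots> = (\<Prod>p\<in>P. infsetsum (\<lambda>a. f (p ^ a)) UNIV)"
    by (rule infsetsum_prod_PiE[where f = "\<lambda>p a. f (p ^ a)"]) (use P local' in auto)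
  also have "\<dots> = (\<Prod>p\<in>P. \<Sum>a. f (p ^ a))"
    using local' by (intro prod.cong refl infsetsum_nat') auto
  finally show "infsetsum f (smooth_numbers P) = (\<Prod>p\<in>P. \<Sum>a. f (p ^ a))" .
qed

lemma summable_norm_prime_powers:
  fixes f :: "nat \<Rightarrow> 'a::real_normed_vector"
  assumes "summable (\<lambda>n. norm (f n))" "prime p"
  shows "summable (\<lambda>a. norm (f (p ^ a)))"
proof -
  have "strict_mono (\<lambda>a. p ^ a)"
    using prime_gt_1_nat[OF assms(2)] by (auto intro: strict_monoI power_strict_increasing)
  hence "summable (\<lambda>a. if p ^ a \<in> range (\<lambda>a. p ^ a) then norm (f (p ^ a)) else 0)
         \<longleftrightarrow> summable (\<lambda>n. if n \<in> range (\<lambda>a. p ^ a) then norm (f n) else 0)"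
    by (intro summable_mono_reindex) auto
  moreover have "summable (\<lambda>n. if n \<in> range (\<lambda>a. p ^ a) then norm (f n) else 0)"
    by (rule summable_comparison_test'[OF assms(1)]) simp
  ultimately show ?thesis by simp
qed

lemma euler_product_LIMSEQ:
  fixes f :: "nat \<Rightarrow> 'a::{real_normed_field,banach,second_countable_topology}"
  assumes f: "multiplicative f" "f 0 = 0" and sum: "summable (\<lambda>n. norm (f n))"
  shows "(\<lambda>N. \<Prod>p | prime p \<and> p < N. \<Sum>a. f (p ^ a)) \<longlonglongrightarrow> (\<Sum>n. f n)"
proof -
  define S where "S N = smooth_numbers {p. prime p \<and> p < N}" for N
  have f_abs: "Infinite_Set_Sum.abs_summable_on f UNIV"
    and norm_abs: "Infinite_Set_Sum.abs_summable_on (\<lambda>n. norm (f n)) UNIV"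
    using sum by (simp_all add: abs_summable_on_nat_iff')
  have euler: "(\<Prod>p | prime p \<and> p < N. \<Sum>a. f (p ^ a)) = infsetsum f (S N)" for N
    unfolding S_def
    by (rule euler_product_smooth_numbers(2)[symmetric, OF f(1)]) (use sum in \<open>auto intro: summable_norm_prime_powers\<close>)
  have tail: "norm (infsetsum f (S N) - infsetsum f UNIV) \<le> (\<Sum>n. norm (f n)) - (\<Sum>n<N. norm (f n))" for N
  proof -
    have "norm (infsetsum f (S N) - infsetsum f UNIV) = norm (infsetsum f (UNIV - S N))"
      by (subst infsetsum_Diff[OF f_abs]) (auto simp: norm_minus_commute)
    also have "\<dots> \<le> infsetsum (\<lambda>n. norm (f n)) (UNIV - S N)" by (rule norm_infsetsum_bound)
    also have "\<dots> \<le> infsetsum (\<lambda>n. norm (f n)) (UNIV - {..<N})"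
    proof (rule infsetsum_mono_neutral)
      fix n assume "n \<in> (UNIV - S N) - (UNIV - {..<N})"
      hence "n = 0" using smooth_numbers_primes_less[of n N] unfolding S_def by auto
      thus "norm (f n) \<le> 0" using f(2) by simp
    qed (auto intro!: Infinite_Set_Sum.abs_summable_on_subset[OF f_abs])
    also have "\<dots> = (\<Sum>n. norm (f n)) - (\<Sum>n<N. norm (f n))"
      by (subst infsetsum_Diff[OF norm_abs]) (simp_all add: infsetsum_nat'[OF norm_abs])
    finally show ?thesis .
  qed
  have "(\<lambda>N. (\<Sum>n. norm (f n)) - (\<Sum>n<N. norm (f n))) \<longlonglongrightarrow> (\<Sum>n. norm (f n)) - (\<Sum>n. norm (f n))"
    by (intro tendsto_diff tendsto_const summable_LIMSEQ sum)
  hence "(\<lambda>N. (\<Sum>n. norm (f n)) - (\<Sum>n<N. norm (f n))) \<longlonglongrightarrow> 0" by simp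
  hence "(\<lambda>N. infsetsum f (S N) - infsetsum f UNIV) \<longlonglongrightarrow> 0"
    by (rule Lim_null_comparison[rotated]) (intro always_eventually allI tail)
  hence "(\<lambda>N. infsetsum f (S N)) \<longlonglongrightarrow> infsetsum f UNIV" by (simp add: LIM_zero_iff)
  thus ?thesis unfolding euler infsetsum_nat'[OF f_abs] .
qed

lemma euler_product_le_suminf:
  fixes f :: "nat \<Rightarrow> real"
  assumes f: "multiplicative f" "\<And>n. f n \<ge> 0" and sum: "summable f"
  shows "(\<Prod>p | prime p \<and> p < N. \<Sum>a. f (p ^ a)) \<le> (\<Sum>n. f n)"
proof -
  have norm_sum: "summable (\<lambda>n. norm (f n))" using sum f(2) by simp
  have local: "summable (\<lambda>a. norm (f (p ^ a)))" if "p \<in> {p. prime p \<and> p < N}" for p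
    using summable_norm_prime_powers[OF norm_sum] that by simp
  note euler = euler_product_smooth_numbers[OF f(1) _ _ local]
  have "(\<Prod>p | prime p \<and> p < N. \<Sum>a. f (p ^ a)) = infsetsum f (smooth_numbers {p. prime p \<and> p < N})"
    by (rule euler(2)[symmetric]) auto
  also have "\<dots> \<le> infsetsum f UNIV"
  proof (rule infsetsum_mono_neutral_left)
    show "Infinite_Set_Sum.abs_summable_on f UNIV"
      using norm_sum by (simp add: abs_summable_on_nat_iff')
    show "Infinite_Set_Sum.abs_summable_on f (smooth_numbers {p. prime p \<and> p < N})"
      by (rule euler(1)) auto
  qed (use f(2) in auto)
  also have "\<dots> = (\<Sum>n. f n)"
    using norm_sum by (intro infsetsum_nat') (simp add: abs_summable_on_nat_iff')
  finally show ?thesis .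
qed

lemma summable_multiplicative_nonneg:
  fixes f :: "nat \<Rightarrow> real"
  assumes f: "multiplicative f" "f 0 = 0" "\<And>n. f n \<ge> 0"
    and local: "\<And>p. prime p \<Longrightarrow> summable (\<lambda>a. f (p ^ a))"
    and bounded: "\<And>N. (\<Prod>p | prime p \<and> p < N. \<Sum>a. f (p ^ a)) \<le> B"
  shows "summable f"
proof (rule summableI_nonneg_bounded)
  fix N
  define S where "S = smooth_numbers {p. prime p \<and> p < N}"
  have local_norm: "summable (\<lambda>a. norm (f (p ^ a)))" if "p \<in> {p. prime p \<and> p < N}" for p
    using local that f(3) by simp
  note euler = euler_product_smooth_numbers[OF f(1) _ _ local_norm, where P = "{p. prime p \<and> p < N}", folded S_def]
  have "(\<Sum>n<N. f n) = (\<Sum>n\<in>{0<..<N}. f n)"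
    by (rule sum.mono_neutral_right) (use f(2) in auto)
  also have "\<dots> = infsetsum f {0<..<N}" by simp
  also have "\<dots> \<le> infsetsum f S"
  proof (rule infsetsum_mono_neutral_left)
    show "Infinite_Set_Sum.abs_summable_on f S" by (rule euler(1)) auto
    show "{0<..<N} \<subseteq> S" unfolding S_def using smooth_numbers_primes_less by auto
  qed (use f(3) in auto)
  also have "\<dots> = (\<Prod>p | prime p \<and> p < N. \<Sum>a. f (p ^ a))" by (rule euler(2)) auto
  also have "\<dots> \<le> B" by (rule bounded)
  finally show "(\<Sum>n<N. f n) \<le> B" .
qed (fact f(3))

lemma LIMSEQ_prod_primes_less:
  fixes g :: "nat \<Rightarrow> 'a::{real_normed_field,banach}"
  assumes "convergent_prod (\<lambda>n. if prime n then g n else 1)"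
  shows "(\<lambda>N. \<Prod>p | prime p \<and> p < N. g p) \<longlonglongrightarrow> (\<Prod>n. if prime n then g n else 1)"
proof -
  have "(\<Prod>n<N. if prime n then g n else 1) = (\<Prod>p | prime p \<and> p < N. g p)" for N
    by (subst prod.inter_filter[symmetric]) (simp_all add: conj_commute)
  thus ?thesis
    using convergent_prod_LIMSEQ[OF assms] by (simp add: LIMSEQ_lessThan_iff_atMost[symmetric])
qed

section \<open>Holomorphy of series and products\<close>

lemma Re_ge_of_mem_cball:
  assumes "w \<in> cball z r"
  shows "Re z - r \<le> Re w"
  using assms abs_Re_le_cmod[of "z - w"] by (simp add: dist_norm)

lemma norm_le_of_mem_cball:
  assumes "w \<in> cball z r"
  shows "norm w \<le> norm z + r"
  using assms norm_triangle_ineq2[of w z] by (simp add: dist_norm norm_minus_commute)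

lemma holomorphic_on_suminf:
  fixes f :: "nat \<Rightarrow> complex \<Rightarrow> complex"
  assumes "open S" and hol: "\<And>n. f n holomorphic_on S"
    and dom: "\<And>z. z \<in> S \<Longrightarrow> \<exists>r>0. cball z r \<subseteq> S \<and>
                 (\<exists>M. summable M \<and> (\<forall>n. \<forall>w\<in>cball z r. norm (f n w) \<le> M n))"
  shows "(\<lambda>s. \<Sum>n. f n s) holomorphic_on S"
proof (rule holomorphic_uniform_sequence[where f = "\<lambda>N s. \<Sum>n<N. f n s"])
  show "open S" by fact
  show "(\<lambda>s. \<Sum>n<N. f n s) holomorphic_on S" for N
    by (intro holomorphic_on_sum) (use hol in auto)
  fix z assume "z \<in> S"
  from dom[OF this] obtain r M where r: "r > 0" "cball z r \<subseteq> S" and M: "summable M"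
    "\<And>n w. w \<in> cball z r \<Longrightarrow> norm (f n w) \<le> M n"
    by blast
  have "uniform_limit (cball z r) (\<lambda>N s. \<Sum>n<N. f n s) (\<lambda>s. \<Sum>n. f n s) sequentially"
    by (rule Weierstrass_m_test[OF M(2) M(1)])
  thus "\<exists>r>0. cball z r \<subseteq> S \<and> uniform_limit (cball z r) (\<lambda>N s. \<Sum>n<N. f n s) (\<lambda>s. \<Sum>n. f n s) sequentially"
    using r by blast
qed

lemma holomorphic_on_prodinf:
  fixes f :: "nat \<Rightarrow> complex \<Rightarrow> complex"
  assumes "open S" and hol: "\<And>n. f n holomorphic_on S"
    and dom: "\<And>z. z \<in> S \<Longrightarrow> \<exists>r>0. cball z r \<subseteq> S \<and> (\<exists>M. summable M \<and>
                 (\<forall>\<^sub>F n in sequentially. \<forall>w\<in>cball z r. norm (f n w - 1) \<le> M n))"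
  shows "(\<lambda>s. \<Prod>n. f n s) holomorphic_on S"
proof (rule holomorphic_uniform_sequence[where f = "\<lambda>N s. \<Prod>n<N. f n s"])
  show "open S" by fact
  show "(\<lambda>s. \<Prod>n<N. f n s) holomorphic_on S" for N
    by (intro holomorphic_on_prod) (use hol in auto)
  fix z assume "z \<in> S"
  from dom[OF this] obtain r M where r: "r > 0" "cball z r \<subseteq> S" and M: "summable M"
    "\<forall>\<^sub>F n in sequentially. \<forall>w\<in>cball z r. norm (f n w - 1) \<le> M n"
    by blast
  have "uniformly_convergent_on (cball z r) (\<lambda>N s. \<Prod>n<N. f n s)"
  proof (rule uniformly_convergent_on_prod')
    show "continuous_on (cball z r) (f n)" for n
      using holomorphic_on_imp_continuous_on[OF hol] r(2) by (rule continuous_on_subset)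
    show "uniformly_convergent_on (cball z r) (\<lambda>N s. \<Sum>n<N. norm (f n s - 1))"
      by (rule Weierstrass_m_test'_ev[OF _ M(1)]) (use M(2) in simp)
  qed simp
  then obtain g where g: "uniform_limit (cball z r) (\<lambda>N s. \<Prod>n<N. f n s) g sequentially"
    by (auto simp: uniformly_convergent_on_def)
  have g_eq: "g s = (\<Prod>n. f n s)" if s: "s \<in> cball z r" for s
  proof -
    have "summable (\<lambda>n. norm (f n s - 1))"
    proof (rule summable_comparison_test_ev[OF _ M(1)])
      show "\<forall>\<^sub>F n in sequentially. norm (norm (f n s - 1)) \<le> M n"
        using M(2) by eventually_elim (use s in auto)
    qed
    hence "convergent_prod (\<lambda>n. f n s)"
      by (intro abs_convergent_prod_imp_convergent_prod summable_imp_abs_convergent_prod)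
    hence "(\<lambda>N. \<Prod>n<N. f n s) \<longlonglongrightarrow> (\<Prod>n. f n s)"
      by (simp add: convergent_prod_LIMSEQ LIMSEQ_lessThan_iff_atMost)
    thus ?thesis using tendsto_uniform_limitI[OF g s] LIMSEQ_unique by blast
  qed
  have "uniform_limit (cball z r) (\<lambda>N s. \<Prod>n<N. f n s) (\<lambda>s. \<Prod>n. f n s) sequentially"
    by (rule uniform_limit_cong'[THEN iffD1, OF _ _ g]) (simp_all add: g_eq)
  thus "\<exists>r>0. cball z r \<subseteq> S \<and> uniform_limit (cball z r) (\<lambda>N s. \<Prod>n<N. f n s) (\<lambda>s. \<Prod>n. f n s) sequentially"
    using r by blast
qed

section \<open>The divisor functions\<close>

definition ordered_factorizations :: "nat \<Rightarrow> nat \<Rightarrow> nat list set" where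
  "ordered_factorizations j m = {xs. length xs = j \<and> (\<forall>x\<in>set xs. 0 < x) \<and> prod_list xs = m}"

lemma divisor_fun_eq_card: "divisor_fun j m = card (ordered_factorizations j m)"
  by (simp add: divisor_fun_def ordered_factorizations_def)

lemma finite_ordered_factorizations:
  assumes "m > 0"
  shows "finite (ordered_factorizations j m)"
proof (rule finite_subset)
  show "ordered_factorizations j m \<subseteq> {xs. set xs \<subseteq> {..m} \<and> length xs = j}"
    using assms by (auto simp: ordered_factorizations_def intro: dvd_imp_le prod_list_dvd)
qed (rule finite_lists_length_eq, simp)

lemma divisor_fun_0: "divisor_fun 0 m = (if m = 1 then 1 else 0)"
proof -
  have "ordered_factorizations 0 m = (if m = 1 then {[]} else {})"
    by (auto simp: ordered_factorizations_def)
  thus ?thesis by (simp add: divisor_fun_eq_card)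
qed

lemma divisor_fun_Suc:
  assumes "m > 0"
  shows "divisor_fun (Suc j) m = (\<Sum>x | x dvd m. divisor_fun j (m div x))"
proof -
  let ?S = "SIGMA x:{x. x dvd m}. ordered_factorizations j (m div x)"
  have eq: "ordered_factorizations (Suc j) m = (\<lambda>(x, xs). x # xs) ` ?S"
  proof (rule set_eqI, rule iffI)
    fix xs assume "xs \<in> ordered_factorizations (Suc j) m"
    then obtain x ys where "xs = x # ys" "length ys = j" "x > 0" "\<forall>y\<in>set ys. 0 < y"
      "x * prod_list ys = m"
      by (cases xs) (auto simp: ordered_factorizations_def)
    thus "xs \<in> (\<lambda>(x, xs). x # xs) ` ?S"
      by (auto simp: ordered_factorizations_def image_iff)
  next
    fix xs assume "xs \<in> (\<lambda>(x, xs). x # xs) ` ?S"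
    then obtain x ys where "xs = x # ys" "x dvd m" "ys \<in> ordered_factorizations j (m div x)"
      by auto
    thus "xs \<in> ordered_factorizations (Suc j) m"
      using assms by (auto simp: ordered_factorizations_def intro: Nat.gr0I)
  qed
  have inj: "inj_on (\<lambda>(x, xs). x # xs) ?S"
    by (auto simp: inj_on_def)
  have fin: "finite {x. x dvd m}" "\<forall>x\<in>{x. x dvd m}. finite (ordered_factorizations j (m div x))"
    using assms by (auto intro!: finite_ordered_factorizations elim!: dvdE)
  show ?thesis
    unfolding divisor_fun_eq_card eq card_image[OF inj] card_SigmaI[OF fin] ..
qed

lemma divisor_fun_1 [simp]: "divisor_fun j (Suc 0) = 1"
  by (induction j) (simp_all add: divisor_fun_0 divisor_fun_Suc)

lemma divisor_fun_mult_coprime: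
  assumes "coprime m n" "m > 0" "n > 0"
  shows "divisor_fun j (m * n) = divisor_fun j m * divisor_fun j n"
  using assms
proof (induction j arbitrary: m n)
  case 0
  thus ?case by (simp add: divisor_fun_0)
next
  case (Suc j)
  have "divisor_fun (Suc j) (m * n) = (\<Sum>x | x dvd m * n. divisor_fun j (m * n div x))"
    using Suc.prems by (simp add: divisor_fun_Suc)
  also have "\<dots> = (\<Sum>x1 | x1 dvd m. \<Sum>x2 | x2 dvd n. divisor_fun j (m * n div (x1 * x2)))"
    by (rule sum_divisors_coprime_mult) (use Suc.prems in auto)
  also have "\<dots> = (\<Sum>x1 | x1 dvd m. \<Sum>x2 | x2 dvd n. divisor_fun j (m div x1) * divisor_fun j (n div x2))"
  proof (intro sum.cong refl, clarsimp)
    fix x1 x2 assume x: "x1 dvd m" "x2 dvd n"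
    have "coprime (m div x1) (n div x2)"
      by (rule coprime_divisors[OF _ _ Suc.prems(1)]) (use x in \<open>auto elim!: dvdE\<close>)
    moreover have "m div x1 > 0" "n div x2 > 0" using x Suc.prems by (auto elim!: dvdE)
    moreover have "m * n div (x1 * x2) = (m div x1) * (n div x2)"
      using x by (simp add: div_mult_div_if_dvd)
    ultimately show "divisor_fun j (m * n div (x1 * x2)) = divisor_fun j (m div x1) * divisor_fun j (n div x2)"
      using Suc.IH by simp
  qed
  also have "\<dots> = divisor_fun (Suc j) m * divisor_fun (Suc j) n"
    using Suc.prems by (simp add: divisor_fun_Suc sum_product)
  finally show ?case .
qed

lemma multiplicative_divisor_fun: "multiplicative (\<lambda>n. of_nat (divisor_fun j n) :: 'a::comm_semiring_1)"
  by (rule multiplicativeI) (simp_all add: divisor_fun_mult_coprime)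

lemma divisor_fun_Suc_prime_power:
  assumes "prime p"
  shows "divisor_fun (Suc j) (p ^ a) = (\<Sum>i\<le>a. divisor_fun j (p ^ (a - i)))"
proof -
  have p: "p > 1" using prime_gt_1_nat[OF assms] .
  have "divisor_fun (Suc j) (p ^ a) = (\<Sum>x | x dvd p ^ a. divisor_fun j (p ^ a div x))"
    using p by (simp add: divisor_fun_Suc)
  also have "{x. x dvd p ^ a} = (\<lambda>i. p ^ i) ` {..a}"
    using divides_primepow_nat[OF assms] by auto
  also have "(\<Sum>x\<in>(\<lambda>i. p ^ i) ` {..a}. divisor_fun j (p ^ a div x)) = (\<Sum>i\<le>a. divisor_fun j (p ^ a div p ^ i))"
    using p by (intro sum.reindex_cong[where l = "\<lambda>i. p ^ i"]) (auto simp: inj_on_def power_inject_exp)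
  also have "\<dots> = (\<Sum>i\<le>a. divisor_fun j (p ^ (a - i)))"
    using p by (intro sum.cong refl) (simp add: power_diff)
  finally show ?thesis .
qed

lemma sums_divisor_fun_prime_power_Suc:
  fixes x :: "'a::{real_normed_field,banach}"
  assumes "prime p" "norm x < 1"
    and sums: "(\<lambda>a. of_nat (divisor_fun j (p ^ a)) * x ^ a) sums S"
    and abs: "summable (\<lambda>a. norm (of_nat (divisor_fun j (p ^ a)) * x ^ a))"
  shows "(\<lambda>a. of_nat (divisor_fun (Suc j) (p ^ a)) * x ^ a) sums (S / (1 - x))"
proof -
  have geom: "(\<lambda>i. x ^ i) sums (1 / (1 - x))"
    using geometric_sums[OF assms(2)] by simp
  have "summable (\<lambda>i. norm (x ^ i))"
    using assms(2) by (simp add: norm_power summable_geometric)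
  hence "(\<lambda>a. \<Sum>i\<le>a. x ^ i * (of_nat (divisor_fun j (p ^ (a - i))) * x ^ (a - i))) sums
           ((\<Sum>i. x ^ i) * (\<Sum>a. of_nat (divisor_fun j (p ^ a)) * x ^ a))"
    by (rule Cauchy_product_sums[OF _ abs])
  also have "(\<lambda>a. \<Sum>i\<le>a. x ^ i * (of_nat (divisor_fun j (p ^ (a - i))) * x ^ (a - i))) =
             (\<lambda>a. of_nat (divisor_fun (Suc j) (p ^ a)) * x ^ a)"
  proof
    fix a
    have "(\<Sum>i\<le>a. x ^ i * (of_nat (divisor_fun j (p ^ (a - i))) * x ^ (a - i))) =
          (\<Sum>i\<le>a. of_nat (divisor_fun j (p ^ (a - i))) * x ^ a)"
      by (intro sum.cong refl) (simp add: power_add[symmetric])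
    thus "(\<Sum>i\<le>a. x ^ i * (of_nat (divisor_fun j (p ^ (a - i))) * x ^ (a - i))) =
          of_nat (divisor_fun (Suc j) (p ^ a)) * x ^ a"
      by (simp add: divisor_fun_Suc_prime_power[OF assms(1)] sum_distrib_right)
  qed
  also have "(\<Sum>i. x ^ i) * (\<Sum>a. of_nat (divisor_fun j (p ^ a)) * x ^ a) = S / (1 - x)"
    using sums_unique[OF geom] sums_unique[OF sums] by (simp add: divide_inverse mult.commute)
  finally show ?thesis .
qed

lemma sums_divisor_fun_prime_power_0:
  assumes "prime p"
  shows "(\<lambda>a. of_nat (divisor_fun 0 (p ^ a)) * x ^ a) sums (1::'a::real_normed_field)"
proof -
  have "(\<lambda>a. of_nat (divisor_fun 0 (p ^ a)) * x ^ a) = (\<lambda>a. if a = 0 then 1 else 0)"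
    using prime_gt_1_nat[OF assms] by (auto simp: divisor_fun_0 fun_eq_iff)
  thus ?thesis using sums_single[of 0 "\<lambda>_. 1::'a"] by simp
qed

lemma sums_divisor_fun_prime_power_real:
  fixes x :: real
  assumes "prime p" "0 \<le> x" "x < 1"
  shows "(\<lambda>a. real (divisor_fun j (p ^ a)) * x ^ a) sums (1 / (1 - x)) ^ j"
proof (induction j)
  case 0
  show ?case using sums_divisor_fun_prime_power_0[OF assms(1)] by simp
next
  case (Suc j)
  have "summable (\<lambda>a. norm (real (divisor_fun j (p ^ a)) * x ^ a))"
    using sums_summable[OF Suc.IH] assms(2) by simp
  from sums_divisor_fun_prime_power_Suc[OF assms(1) _ Suc.IH this] assms(2,3)
  show ?case by (simp add: field_simps)
qed

lemma sums_divisor_fun_prime_power: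
  fixes x :: "'a::{real_normed_field,banach}"
  assumes "prime p" "norm x < 1"
  shows "(\<lambda>a. of_nat (divisor_fun j (p ^ a)) * x ^ a) sums (1 / (1 - x)) ^ j"
proof (induction j)
  case 0
  show ?case using sums_divisor_fun_prime_power_0[OF assms(1)] by simp
next
  case (Suc j)
  have "summable (\<lambda>a. real (divisor_fun j (p ^ a)) * norm x ^ a)"
    using sums_summable[OF sums_divisor_fun_prime_power_real[OF assms(1) norm_ge_zero assms(2)]] .
  hence "summable (\<lambda>a. norm (of_nat (divisor_fun j (p ^ a)) * x ^ a :: 'a))"
    by (simp add: norm_mult norm_power)
  from sums_divisor_fun_prime_power_Suc[OF assms Suc.IH this] assms(2)
  show ?case by (simp add: field_simps)
qed

lemma summable_divisor_fun_powr:
  assumes "\<sigma> > 1"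
  shows "summable (\<lambda>n. real (divisor_fun j n) * real n powr (-\<sigma>))"
proof -
  let ?w = "\<lambda>n. real n powr (-\<sigma>)"
  have w_sum: "summable ?w" using assms by (simp add: summable_real_powr_iff)
  have w_local: "summable (\<lambda>a. ?w (p ^ a))" if "prime p" for p
    using summable_norm_prime_powers[of ?w p] w_sum that by simp
  have local: "(\<lambda>a. real (divisor_fun j (p ^ a)) * ?w (p ^ a)) sums (\<Sum>a. ?w (p ^ a)) ^ j"
    if "prime p" for p
  proof -
    have "?w p < 1" using prime_gt_1_nat[OF that] assms by (intro powr_less_one) auto
    hence "(\<lambda>a. ?w p ^ a) sums (1 / (1 - ?w p))"
      using geometric_sums[of "?w p"] by simp
    moreover have "(\<lambda>a. real (divisor_fun j (p ^ a)) * ?w p ^ a) sums (1 / (1 - ?w p)) ^ j"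
      using \<open>?w p < 1\<close> by (intro sums_divisor_fun_prime_power_real that) auto
    ultimately show ?thesis by (simp add: power_powr_real sums_iff)
  qed
  show ?thesis
  proof (rule summable_multiplicative_nonneg)
    show "multiplicative (\<lambda>n. real (divisor_fun j n) * ?w n)"
      by (intro multiplicative_mult multiplicative_divisor_fun multiplicative_real_powr)
    show "summable (\<lambda>a. real (divisor_fun j (p ^ a)) * ?w (p ^ a))" if "prime p" for p
      using local[OF that] by (rule sums_summable)
    fix N
    have "(\<Prod>p | prime p \<and> p < N. \<Sum>a. real (divisor_fun j (p ^ a)) * ?w (p ^ a)) =
          (\<Prod>p | prime p \<and> p < N. \<Sum>a. ?w (p ^ a)) ^ j"
      using local by (simp add: sums_iff prod_power_distrib)
    also have "\<dots> \<le> (\<Sum>n. ?w n) ^ j"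
      using euler_product_le_suminf[OF multiplicative_real_powr _ w_sum]
      by (intro power_mono prod_nonneg suminf_nonneg) (auto intro: w_local[simplified])
    finally show "(\<Prod>p | prime p \<and> p < N. \<Sum>a. real (divisor_fun j (p ^ a)) * ?w (p ^ a)) \<le> (\<Sum>n. ?w n) ^ j" .
  qed simp_all
qed

section \<open>Ramanujan sums\<close>

lemma exp_two_pi_i_eq_1_iff:
  "exp (2 * of_real pi * \<i> * of_real t) = 1 \<longleftrightarrow> (\<exists>k::int. t = of_int k)"
proof -
  have "exp (2 * of_real pi * \<i> * of_real t) = 1 \<longleftrightarrow> (\<exists>k::int. 2 * pi * t = of_int (2 * k) * pi)"
    by (simp add: exp_eq_1)
  also have "\<dots> \<longleftrightarrow> (\<exists>k::int. t = of_int k)"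
    by (intro ex_cong1) auto
  finally show ?thesis .
qed

lemma sum_e_fun_roots_of_unity:
  assumes "n > 0"
  shows "(\<Sum>c<n. e_fun (real c * real_of_int h / real n)) = (if int n dvd h then of_nat n else 0)"
proof -
  define \<omega> where "\<omega> = exp (2 * of_real pi * \<i> * of_real (real_of_int h / real n))"
  have power: "e_fun (real c * real_of_int h / real n) = \<omega> ^ c" for c
  proof -
    have "e_fun (real c * real_of_int h / real n) =
          exp (of_nat c * (2 * of_real pi * \<i> * of_real (real_of_int h / real n)))"
      unfolding e_fun_def by (simp add: algebra_simps)
    thus ?thesis unfolding \<omega>_def by (simp only: exp_of_nat_mult)
  qed
  have "\<omega> = 1 \<longleftrightarrow> int n dvd h"
  proof -
    have "\<omega> = 1 \<longleftrightarrow> (\<exists>k::int. real_of_int h = real_of_int (int n * k))"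
      unfolding \<omega>_def exp_two_pi_i_eq_1_iff using assms by (simp add: field_simps)
    also have "\<dots> \<longleftrightarrow> int n dvd h"
      by (auto simp: dvd_def simp del: of_int_mult)
    finally show ?thesis .
  qed
  moreover have "\<omega> ^ n = 1"
  proof -
    have "\<omega> ^ n = exp (of_nat n * (2 * of_real pi * \<i> * of_real (real_of_int h / real n)))"
      unfolding \<omega>_def by (rule exp_of_nat_mult[symmetric])
    also have "of_nat n * (2 * of_real pi * \<i> * of_real (real_of_int h / real n)) =
               2 * of_real pi * \<i> * of_real (real_of_int h)"
      using assms by (simp add: field_simps)
    also have "exp \<dots> = 1" by (subst exp_two_pi_i_eq_1_iff) auto
    finally show ?thesis .
  qed
  ultimately show ?thesis by (cases "\<omega> = 1") (simp_all add: power geometric_sum)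
qed

lemma sum_e_fun_multiples:
  assumes "m > 0" "e dvd m"
  shows "(\<Sum>b | b < m \<and> e dvd b. e_fun (real b * real_of_int h / real m)) =
         (if int (m div e) dvd h then of_nat (m div e) else 0)"
proof -
  obtain q where q: "m = e * q" "e > 0" "q > 0" using assms by (auto elim!: dvdE)
  have "{b. b < m \<and> e dvd b} = (\<lambda>c. e * c) ` {..<q}"
    using q by (auto elim!: dvdE)
  moreover have "inj_on (\<lambda>c. e * c) {..<q}" using q by (auto simp: inj_on_def)
  ultimately have "(\<Sum>b | b < m \<and> e dvd b. e_fun (real b * real_of_int h / real m)) =
                   (\<Sum>c<q. e_fun (real (e * c) * real_of_int h / real m))"
    by (simp add: sum.reindex)
  also have "\<dots> = (\<Sum>c<q. e_fun (real c * real_of_int h / real q))"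
    using q by (intro sum.cong refl) (simp add: field_simps)
  also have "\<dots> = (if int q dvd h then of_nat q else 0)"
    by (rule sum_e_fun_roots_of_unity) (use q in simp)
  finally show ?thesis using q by simp
qed

lemma sum_gcd_eq_sum_totient:
  fixes X :: "nat \<Rightarrow> 'a::comm_semiring_1"
  assumes "m > 0"
  shows "(\<Sum>b<m. of_nat (gcd b m) * X b) = (\<Sum>e | e dvd m. of_nat (totient e) * (\<Sum>b | b < m \<and> e dvd b. X b))"
proof -
  have gcd_eq: "gcd b m = (\<Sum>e | e dvd m \<and> e dvd b. totient e)" for b
    using totient_divisor_sum[of "gcd b m"] by (simp add: conj_commute)
  have "(\<Sum>b<m. of_nat (gcd b m) * X b) = (\<Sum>b<m. \<Sum>e | e dvd m \<and> e dvd b. of_nat (totient e) * X b)"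
    by (simp add: gcd_eq sum_distrib_right)
  also have "\<dots> = (\<Sum>e | e dvd m. \<Sum>b | b < m \<and> e dvd b. of_nat (totient e) * X b)"
    using sum.swap_restrict[of "{..<m}" "{e. e dvd m}" "\<lambda>b e. of_nat (totient e) * X b" "\<lambda>b e. e dvd b"] assms
    by (simp add: conj_commute)
  finally show ?thesis by (simp add: sum_distrib_left)
qed

lemma g_fun_eq_gcd_sum:
  assumes "m > 0"
  shows "g_fun m h = (\<Sum>b<m. of_nat (gcd b m) * e_fun (real b * real_of_int h / real m)) / of_nat m"
proof -
  define S where "S = (SIGMA d:{d. d dvd m}. {a. a < d \<and> coprime a d})"
  have "g_fun m h = (\<Sum>d | d dvd m. \<Sum>a | a < d \<and> coprime a d. e_fun (real a * real_of_int h / real d) / of_nat d)"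
    unfolding g_fun_def ramanujan_sum_def by (simp add: sum_divide_distrib)
  also have "\<dots> = (\<Sum>(d, a)\<in>S. e_fun (real a * real_of_int h / real d) / of_nat d)"
    unfolding S_def using assms by (intro sum.Sigma) auto
  also have "\<dots> = (\<Sum>b<m. of_nat (gcd b m) / of_nat m * e_fun (real b * real_of_int h / real m))"
  proof (rule sum.reindex_bij_witness[where j = "\<lambda>(d, a). a * (m div d)"
                                        and i = "\<lambda>b. (m div gcd b m, b div gcd b m)"])
    fix da assume "da \<in> S"
    then obtain d a where da: "da = (d, a)" and "a < d" "coprime a d" and "d dvd m"
      unfolding S_def by auto
    then obtain q where q: "m = d * q" "d > 0" "q > 0" using assms by (auto elim!: dvdE)
    have gcd: "gcd (a * q) m = q"
      using \<open>coprime a d\<close> q(1) by (simp add: gcd_mult_right mult.commute coprime_iff_gcd_eq_1 gcd.commute)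
    have quot: "m div d = q" "m div q = d" using q by simp_all
    show "(\<lambda>b. (m div gcd b m, b div gcd b m)) ((\<lambda>(d, a). a * (m div d)) da) = da"
      using da gcd quot q by simp
    show "(\<lambda>(d, a). a * (m div d)) da \<in> {..<m}"
      using da quot q \<open>a < d\<close> by simp
    have "e_fun (real (a * q) * real_of_int h / real m) = e_fun (real a * real_of_int h / real d)"
      using q by (simp add: field_simps)
    moreover have "(of_nat q :: complex) / of_nat m = 1 / of_nat d"
      using q by (simp add: field_simps)
    ultimately show "of_nat (gcd ((\<lambda>(d, a). a * (m div d)) da) m) / of_nat m *
         e_fun (real ((\<lambda>(d, a). a * (m div d)) da) * real_of_int h / real m) =
       (\<lambda>(d, a). e_fun (real a * real_of_int h / real d) / of_nat d) da"
      using da gcd quot by simp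
  next
    fix b assume "b \<in> {..<m}"
    define g where "g = gcd b m"
    obtain x y where xy: "b = g * x" "m = g * y" unfolding g_def by (meson dvdE gcd_dvd1 gcd_dvd2)
    have "g > 0" using assms by (simp add: g_def)
    hence "m div g = y" "b div g = x" "m div y = g"
      using xy assms by simp_all
    note quot = this[unfolded g_def]
    have "coprime (b div g) (m div g)"
      unfolding g_def using assms by (intro div_gcd_coprime) auto
    thus "(\<lambda>(d, a). a * (m div d)) ((\<lambda>b. (m div gcd b m, b div gcd b m)) b) = b"
      "(\<lambda>b. (m div gcd b m, b div gcd b m)) b \<in> S"
      using quot xy \<open>b \<in> {..<m}\<close> \<open>g > 0\<close> by (auto simp: S_def g_def[symmetric])
  qed
  finally show ?thesis by (simp add: sum_divide_distrib)
qed

definition g_totient :: "nat \<Rightarrow> nat \<Rightarrow> real" where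
  "g_totient H m = (\<Sum>e | e dvd m \<and> m div e dvd H. real (totient e) / real e)"

lemma g_totient_altdef:
  assumes "m > 0"
  shows "g_totient H m = (\<Sum>e | e dvd m. if m div e dvd H then real (totient e) / real e else 0)"
  unfolding g_totient_def using assms by (simp add: sum.inter_filter[symmetric] conj_commute)

lemma g_fun_eq_g_totient:
  assumes "m > 0" "h > 0"
  shows "g_fun m h = of_real (g_totient (nat h) m)"
proof -
  have "g_fun m h = (\<Sum>e | e dvd m. of_nat (totient e) *
                       (if int (m div e) dvd h then of_nat (m div e) else 0)) / of_nat m"
    using assms(1) by (simp add: g_fun_eq_gcd_sum sum_gcd_eq_sum_totient sum_e_fun_multiples)
  also have "\<dots> = (\<Sum>e | e dvd m. if m div e dvd nat h then of_real (real (totient e) / real e) else 0)"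
    unfolding sum_divide_distrib
  proof (intro sum.cong refl)
    fix e assume "e \<in> {e. e dvd m}"
    then obtain q where q: "m = e * q" "e > 0" "q > 0" using assms(1) by (auto elim!: dvdE)
    have "int q dvd h \<longleftrightarrow> q dvd nat h"
      using assms(2) by (metis int_dvd_int_iff int_nat_eq order_less_imp_le)
    thus "of_nat (totient e) * (if int (m div e) dvd h then of_nat (m div e) else 0) / of_nat m =
          (if m div e dvd nat h then of_real (real (totient e) / real e) else (0::complex))"
      using q by (simp add: field_simps)
  qed
  also have "\<dots> = of_real (g_totient (nat h) m)"
    using assms(1) by (simp add: g_totient_altdef if_distrib cong: if_cong)
  finally show ?thesis .
qed

lemma g_totient_nonneg: "g_totient H m \<ge> 0"
  unfolding g_totient_def by (intro sum_nonneg) auto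

lemma g_totient_1 [simp]: "g_totient H (Suc 0) = 1"
proof -
  have "{e. e dvd 1 \<and> 1 div e dvd H} = {1}" by auto
  thus ?thesis by (simp add: g_totient_def)
qed

lemma g_totient_le:
  assumes "H > 0"
  shows "g_totient H m \<le> real H"
proof -
  let ?E = "{e. e dvd m \<and> m div e dvd H}"
  have "g_totient H m \<le> (\<Sum>e\<in>?E. 1)"
    unfolding g_totient_def
  proof (rule sum_mono)
    show "real (totient e) / real e \<le> 1" for e
      by (cases "e = 0") (auto simp: totient_le)
  qed
  also have "\<dots> = real (card ?E)" by simp
  also have "card ?E \<le> card {d. d dvd H}"
  proof (cases "m = 0")
    case True
    with assms have "?E = {}" by auto
    show ?thesis unfolding \<open>?E = {}\<close> by simp
  next
    case False
    have inj: "inj_on (\<lambda>e. m div e) ?E"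
    proof (rule inj_onI, clarsimp)
      fix x y assume "x dvd m" "y dvd m" "m div x = m div y"
      moreover have "m div x \<noteq> 0" using \<open>x dvd m\<close> False by (auto elim!: dvdE)
      ultimately show "x = y" by (metis dvd_mult_div_cancel mult_right_cancel)
    qed
    have "(\<lambda>e. m div e) ` ?E \<subseteq> {d. d dvd H}" by auto
    with inj show ?thesis by (rule card_inj_on_le) (use assms in simp)
  qed
  also have "card {d. d dvd H} \<le> card {1..H}"
    using assms by (intro card_mono) (auto intro: dvd_imp_le Nat.gr0I)
  finally show ?thesis by simp
qed

lemma g_totient_mult_coprime:
  assumes "coprime m n" "m > 0" "n > 0"
  shows "g_totient H (m * n) = g_totient H m * g_totient H n"
proof -
  have "g_totient H (m * n) = (\<Sum>e | e dvd m * n. if m * n div e dvd H then real (totient e) / real e else 0)"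
    using assms by (simp add: g_totient_altdef)
  also have "\<dots> = (\<Sum>e1 | e1 dvd m. \<Sum>e2 | e2 dvd n.
       if m * n div (e1 * e2) dvd H then real (totient (e1 * e2)) / real (e1 * e2) else 0)"
    by (rule sum_divisors_coprime_mult) (use assms in auto)
  also have "\<dots> = (\<Sum>e1 | e1 dvd m. \<Sum>e2 | e2 dvd n.
       (if m div e1 dvd H then real (totient e1) / real e1 else 0) *
       (if n div e2 dvd H then real (totient e2) / real e2 else 0))"
  proof (intro sum.cong refl)
    fix e1 e2 assume "e1 \<in> {e. e dvd m}" "e2 \<in> {e. e dvd n}"
    hence e: "e1 dvd m" "e2 dvd n" by simp_all
    have "coprime (m div e1) (n div e2)"
      by (rule coprime_divisors[OF _ _ assms(1)]) (use e in \<open>auto elim!: dvdE\<close>)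
    hence "(m div e1) * (n div e2) dvd H \<longleftrightarrow> m div e1 dvd H \<and> n div e2 dvd H"
      by (auto intro: divides_mult dest: dvd_mult_left dvd_mult_right)
    moreover have "m * n div (e1 * e2) = (m div e1) * (n div e2)"
      using e by (simp add: div_mult_div_if_dvd)
    moreover have "totient (e1 * e2) = totient e1 * totient e2"
      by (rule totient_mult_coprime[OF coprime_divisors[OF e assms(1)]])
    ultimately show "(if m * n div (e1 * e2) dvd H then real (totient (e1 * e2)) / real (e1 * e2) else 0) =
          (if m div e1 dvd H then real (totient e1) / real e1 else 0) *
          (if n div e2 dvd H then real (totient e2) / real e2 else 0)"
      by auto
  qed
  also have "\<dots> = g_totient H m * g_totient H n"
    using assms by (simp add: g_totient_altdef sum_product)
  finally show ?thesis .
qed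

lemma multiplicative_g_totient: "multiplicative (g_totient H)"
  by (rule multiplicativeI[OF _ g_totient_mult_coprime]) simp_all

lemma g_totient_prime_power:
  assumes "prime p" "\<not> p dvd H" "a > 0"
  shows "g_totient H (p ^ a) = 1 - 1 / real p"
proof -
  have p: "p > 1" using prime_gt_1_nat[OF assms(1)] .
  have "{e. e dvd p ^ a \<and> p ^ a div e dvd H} = {p ^ a}"
  proof (rule set_eqI, rule iffI)
    fix e assume "e \<in> {e. e dvd p ^ a \<and> p ^ a div e dvd H}"
    then obtain i where i: "i \<le> a" "e = p ^ i" and "p ^ a div p ^ i dvd H"
      using divides_primepow_nat[OF assms(1)] by auto
    hence "p ^ (a - i) dvd H" using p by (simp add: power_diff)
    have "a - i = 0"
    proof (rule ccontr)
      assume "a - i \<noteq> 0"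
      hence "p dvd p ^ (a - i)" by (simp add: dvd_power)
      thus False using \<open>p ^ (a - i) dvd H\<close> assms(2) dvd_trans by blast
    qed
    thus "e \<in> {p ^ a}" using i by simp
  qed (use p in auto)
  hence "g_totient H (p ^ a) = real (totient (p ^ a)) / real (p ^ a)"
    unfolding g_totient_def by simp
  also have "\<dots> = real (p ^ (a - 1) * (p - 1)) / real (p ^ a)"
    using assms by (simp add: totient_prime_power)
  also have "\<dots> = 1 - 1 / real p"
  proof -
    have "p ^ a = p ^ (a - 1) * p" using assms(3) by (cases a) auto
    thus ?thesis using p by (simp add: field_simps of_nat_diff)
  qed
  finally show ?thesis .
qed

section \<open>The Dirichlet series and its Euler product\<close>

definition D_coeff :: "nat \<Rightarrow> nat \<Rightarrow> nat \<Rightarrow> real" where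
  "D_coeff k H m = real (divisor_fun (k - 1) m) * g_totient H m"

lemma multiplicative_D_coeff: "multiplicative (D_coeff k H)"
  unfolding D_coeff_def[abs_def]
  by (intro multiplicative_mult multiplicative_divisor_fun multiplicative_g_totient)

lemma D_coeff_nonneg: "D_coeff k H m \<ge> 0"
  by (simp add: D_coeff_def g_totient_nonneg)

lemma D_coeff_le:
  assumes "H > 0"
  shows "D_coeff k H m \<le> real H * real (divisor_fun (k - 1) m)"
proof -
  have "g_totient H m * real (divisor_fun (k - 1) m) \<le> real H * real (divisor_fun (k - 1) m)"
    by (intro mult_right_mono g_totient_le assms) auto
  thus ?thesis by (simp add: D_coeff_def mult.commute)
qed

lemma D_coeff_prime_power:
  assumes "prime p" "\<not> p dvd H"
  shows "D_coeff k H (p ^ a) = (if a = 0 then 1 else real (divisor_fun (k - 1) (p ^ a)) * (1 - 1 / real p))"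
  using assms by (simp add: D_coeff_def g_totient_prime_power)

lemma D_term_eq:
  assumes "h > 0"
  shows "D_term k h s m = of_real (D_coeff k (nat h) m) * of_nat m powr (-s)"
  by (cases "m = 0")
     (use assms in \<open>simp_all add: D_term_def D_coeff_def g_fun_eq_g_totient powr_minus divide_inverse\<close>)

lemma summable_norm_D_term:
  assumes "h > 0" "Re s > 1"
  shows "summable (\<lambda>m. norm (D_term k h s m))"
proof (rule summable_comparison_test')
  show "summable (\<lambda>m. real (nat h) * (real (divisor_fun (k - 1) m) * real m powr (- Re s)))"
    using summable_divisor_fun_powr[OF assms(2)] by (rule summable_mult)
  fix m
  have "norm (D_term k h s m) = D_coeff k (nat h) m * real m powr (- Re s)"
    using assms(1) D_coeff_nonneg by (simp add: D_term_eq norm_mult norm_of_nat_powr)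
  also have "\<dots> \<le> real (nat h) * real (divisor_fun (k - 1) m) * real m powr (- Re s)"
    using assms(1) by (intro mult_right_mono D_coeff_le) auto
  finally show "norm (norm (D_term k h s m)) \<le> real (nat h) * (real (divisor_fun (k - 1) m) * real m powr (- Re s))"
    by simp
qed

definition D_euler_factor :: "nat \<Rightarrow> nat \<Rightarrow> complex \<Rightarrow> nat \<Rightarrow> complex" where
  "D_euler_factor k H s p = (\<Sum>a. of_real (D_coeff k H (p ^ a)) * (of_nat p powr (-s)) ^ a)"

lemma norm_D_euler_term_le:
  assumes "H > 0" "p > 0" "\<sigma> \<le> Re s"
  shows "norm (of_real (D_coeff k H (p ^ a)) * (of_nat p powr (-s)) ^ a) \<le>
         real H * (real (divisor_fun (k - 1) (p ^ a)) * (real p powr (-\<sigma>)) ^ a)"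
proof -
  have "norm (of_real (D_coeff k H (p ^ a)) * (of_nat p powr (-s)) ^ a) =
        D_coeff k H (p ^ a) * (real p powr (- Re s)) ^ a"
    using D_coeff_nonneg by (simp add: norm_mult norm_power norm_of_nat_powr)
  also have "\<dots> \<le> (real H * real (divisor_fun (k - 1) (p ^ a))) * (real p powr (-\<sigma>)) ^ a"
    using assms by (intro mult_mono D_coeff_le power_mono powr_mono) auto
  finally show ?thesis by (simp add: mult.assoc)
qed

lemma summable_divisor_fun_prime_power_powr:
  assumes "prime p" "\<sigma> > 0"
  shows "summable (\<lambda>a. C * (real (divisor_fun j (p ^ a)) * (real p powr (-\<sigma>)) ^ a))"
proof -
  have "real p powr (-\<sigma>) < 1" using prime_gt_1_nat[OF assms(1)] assms(2) by (intro powr_less_one) auto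
  thus ?thesis
    by (intro summable_mult sums_summable[OF sums_divisor_fun_prime_power_real[OF assms(1)]]) auto
qed

lemma holomorphic_D_euler_factor:
  assumes "H > 0" "prime p"
  shows "(\<lambda>s. D_euler_factor k H s p) holomorphic_on {s. Re s > 0}"
  unfolding D_euler_factor_def
proof (rule holomorphic_on_suminf)
  show "open {s. Re s > 0}" by (rule open_halfspace_Re_gt)
  show "(\<lambda>s. of_real (D_coeff k H (p ^ a)) * (of_nat p powr (-s)) ^ a) holomorphic_on {s. Re s > 0}" for a
    by (intro holomorphic_intros) (use assms(2) in \<open>auto dest: prime_gt_0_nat\<close>)
  fix z assume "z \<in> {s. Re s > (0::real)}"
  hence z: "Re z > 0" by simp
  have Re_w: "Re w \<ge> Re z / 2" if "w \<in> cball z (Re z / 2)" for w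
    using Re_ge_of_mem_cball[OF that] by simp
  show "\<exists>r>0. cball z r \<subseteq> {s. Re s > 0} \<and> (\<exists>M. summable M \<and>
          (\<forall>a. \<forall>w\<in>cball z r. norm (of_real (D_coeff k H (p ^ a)) * (of_nat p powr (-w)) ^ a) \<le> M a))"
  proof (intro exI conjI allI ballI)
    show "cball z (Re z / 2) \<subseteq> {s. Re s > 0}" using Re_w z by fastforce
    show "summable (\<lambda>a. real H * (real (divisor_fun (k - 1) (p ^ a)) * (real p powr (-(Re z / 2))) ^ a))"
      using z by (intro summable_divisor_fun_prime_power_powr assms(2)) simp
    show "norm (of_real (D_coeff k H (p ^ a)) * (of_nat p powr (-w)) ^ a) \<le>
          real H * (real (divisor_fun (k - 1) (p ^ a)) * (real p powr (-(Re z / 2))) ^ a)"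
      if "w \<in> cball z (Re z / 2)" for a w
      using Re_w[OF that] prime_gt_0_nat[OF assms(2)] by (intro norm_D_euler_term_le assms(1))
  qed (use z in simp)
qed

lemma D_euler_factor_coprime:
  assumes "prime p" "\<not> p dvd H" "Re s > 0"
  shows "D_euler_factor k H s p = (1 - 1 / of_nat p) * (1 / (1 - of_nat p powr (-s))) ^ (k - 1) + 1 / of_nat p"
proof -
  define x where "x = (of_nat p powr (-s) :: complex)"
  have "norm x < 1"
    unfolding x_def using norm_of_nat_powr_less_1[OF prime_gt_1_nat[OF assms(1)] assms(3)] .
  hence "(\<lambda>a. (1 - 1 / of_nat p) * (of_nat (divisor_fun (k - 1) (p ^ a)) * x ^ a) +
              (if a = 0 then 1 / of_nat p else 0))
         sums ((1 - 1 / of_nat p) * (1 / (1 - x)) ^ (k - 1) + 1 / of_nat p)"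
    by (intro sums_add sums_mult sums_divisor_fun_prime_power assms(1) sums_single)
  also have "(\<lambda>a. (1 - 1 / of_nat p) * (of_nat (divisor_fun (k - 1) (p ^ a)) * x ^ a) +
              (if a = 0 then 1 / of_nat p else 0)) = (\<lambda>a. of_real (D_coeff k H (p ^ a)) * x ^ a)"
    using assms by (auto simp: D_coeff_prime_power field_simps)
  finally show ?thesis unfolding D_euler_factor_def x_def by (simp add: sums_iff)
qed

lemma Re_D_euler_factor_1_ge_1:
  assumes "H > 0" "prime p"
  shows "Re (D_euler_factor k H 1 p) \<ge> 1"
proof -
  define t where "t a = D_coeff k H (p ^ a) * (1 / real p) ^ a" for a
  have "(of_nat p powr (-1) :: complex) = inverse (of_nat p powr 1)" by (rule powr_minus)
  also have "\<dots> = of_real (1 / real p)" using prime_gt_0_nat[OF assms(2)] by (simp add: field_simps)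
  finally have t: "of_real (D_coeff k H (p ^ a)) * (of_nat p powr (-1)) ^ a = (of_real (t a) :: complex)" for a
    by (simp add: t_def)
  have "summable t"
    using summable_comparison_test'[OF summable_divisor_fun_prime_power_powr[OF assms(2), of 1 "real H" "k - 1"]
            norm_D_euler_term_le[OF assms(1) prime_gt_0_nat[OF assms(2)], of 1 1 k]]
    by (simp add: t)
  hence "D_euler_factor k H 1 p = of_real (\<Sum>a. t a)"
    unfolding D_euler_factor_def t by (rule suminf_of_real[symmetric])
  moreover have "sum t {..<1} \<le> (\<Sum>a. t a)"
    by (rule sum_le_suminf[OF \<open>summable t\<close>]) (auto simp: t_def D_coeff_nonneg)
  moreover have "sum t {..<1} = 1" by (simp add: t_def D_coeff_def)
  ultimately show ?thesis by simp
qed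

lemma D_euler_product:
  assumes "h > 0" "Re s > 1"
  shows "(\<lambda>N. \<Prod>p | prime p \<and> p < N. D_euler_factor k (nat h) s p) \<longlonglongrightarrow> D_series k h s"
proof -
  define f where "f m = of_real (D_coeff k (nat h) m) * of_nat m powr (-s)" for m
  have "multiplicative f"
    unfolding f_def[abs_def]
    by (intro multiplicative_mult multiplicative_of_real multiplicative_D_coeff multiplicative_complex_powr)
  moreover have "f 0 = 0" by (simp add: f_def)
  moreover have "summable (\<lambda>m. norm (f m))"
    using summable_norm_D_term[OF assms] by (simp add: D_term_eq[OF assms(1)] f_def)
  ultimately have "(\<lambda>N. \<Prod>p | prime p \<and> p < N. \<Sum>a. f (p ^ a)) \<longlonglongrightarrow> (\<Sum>m. f m)"
    by (rule euler_product_LIMSEQ)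
  moreover have "(\<Sum>a. f (p ^ a)) = D_euler_factor k (nat h) s p" for p
    by (simp add: f_def D_euler_factor_def of_nat_power_powr_complex)
  moreover have "(\<Sum>m. f m) = D_series k h s"
    by (simp add: f_def D_series_def D_term_eq[OF assms(1)])
  ultimately show ?thesis by simp
qed

section \<open>The zeta function near its pole\<close>

lemma zeta_euler_product:
  assumes "Re s > 1"
  shows "(\<lambda>N. \<Prod>p | prime p \<and> p < N. 1 / (1 - of_nat p powr (-s))) \<longlonglongrightarrow> zeta_dirichlet s"
proof -
  define f where "f n = (of_nat n powr (-s) :: complex)" for n
  have "summable (\<lambda>n. norm (f n))"
    using assms by (simp add: f_def norm_of_nat_powr summable_real_powr_iff)
  hence "(\<lambda>N. \<Prod>p | prime p \<and> p < N. \<Sum>a. f (p ^ a)) \<longlonglongrightarrow> (\<Sum>n. f n)"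
    by (intro euler_product_LIMSEQ) (simp_all add: f_def multiplicative_complex_powr)
  moreover have "(\<Prod>p | prime p \<and> p < N. \<Sum>a. f (p ^ a)) =
                 (\<Prod>p | prime p \<and> p < N. 1 / (1 - of_nat p powr (-s)))" for N
  proof (rule prod.cong)
    fix p assume "p \<in> {p. prime p \<and> p < N}"
    thus "(\<Sum>a. f (p ^ a)) = 1 / (1 - of_nat p powr (-s))"
      using geometric_sums[OF norm_of_nat_powr_less_1[OF prime_gt_1_nat]] assms
      by (simp add: f_def of_nat_power_powr_complex sums_iff)
  qed simp
  moreover have "(\<Sum>n. f n) = zeta_dirichlet s"
    unfolding zeta_dirichlet_def f_def by (intro suminf_cong) (simp add: powr_minus_divide)
  ultimately show ?thesis by simp
qed

lemma convergent_prod_zeta_inverse_factors: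
  assumes "Re s > 1"
  shows "convergent_prod (\<lambda>n. if prime n then 1 - of_nat n powr (-s) else 1 :: complex)"
proof -
  have "summable (\<lambda>n. norm ((if prime n then 1 - of_nat n powr (-s) else 1) - 1 :: complex))"
  proof (rule summable_comparison_test')
    show "summable (\<lambda>n. real n powr (- Re s))"
      using assms by (simp add: summable_real_powr_iff)
  qed (simp add: norm_of_nat_powr)
  thus ?thesis by (intro abs_convergent_prod_imp_convergent_prod summable_imp_abs_convergent_prod)
qed

lemma zeta_dirichlet_mult_prodinf:
  assumes "Re s > 1"
  shows "(\<Prod>n. if prime n then 1 - of_nat n powr (-s) else 1) * zeta_dirichlet s = 1"
proof -
  define P where "P N = (\<Prod>p | prime p \<and> p < N. 1 - of_nat p powr (-s) :: complex)" for N
  have "(1 - of_nat p powr (-s)) * (1 / (1 - of_nat p powr (-s))) = (1 :: complex)" if "prime p" for p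
  proof -
    have "of_nat p powr (-s) \<noteq> (1 :: complex)"
      using norm_of_nat_powr_less_1[OF prime_gt_1_nat[OF that], of s] assms by auto
    thus ?thesis by simp
  qed
  hence "P N * (\<Prod>p | prime p \<and> p < N. 1 / (1 - of_nat p powr (-s))) = 1" for N
    unfolding P_def prod.distrib[symmetric] by (intro prod.neutral) auto
  moreover have "(\<lambda>N. P N * (\<Prod>p | prime p \<and> p < N. 1 / (1 - of_nat p powr (-s))))
      \<longlonglongrightarrow> (\<Prod>n. if prime n then 1 - of_nat n powr (-s) else 1) * zeta_dirichlet s"
    unfolding P_def
    by (rule tendsto_mult[OF LIMSEQ_prod_primes_less[OF convergent_prod_zeta_inverse_factors[OF assms]]
          zeta_euler_product[OF assms]])
  ultimately show ?thesis by (simp add: LIMSEQ_const_iff)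
qed

lemma closed_segment_of_real_eq:
  "a \<le> b \<Longrightarrow> closed_segment (complex_of_real a) (of_real b) = of_real ` {a..b}"
  by (simp add: closed_segment_of_real closed_segment_eq_real_ivl1)

lemma norm_powr_minus_diff_le:
  fixes s :: complex
  assumes "0 < a" "a \<le> b" "Re s \<ge> 0" and z: "z \<in> closed_segment (of_real a) (of_real b)"
  shows "norm (z powr (-s) - of_real a powr (-s)) \<le> norm s * a powr (- Re s - 1) * norm (z - of_real a)"
proof (rule field_differentiable_bound[OF convex_closed_segment _ _ z])
  fix x assume "x \<in> closed_segment (complex_of_real a) (of_real b)"
  then obtain t where t: "x = of_real t" "a \<le> t" using closed_segment_of_real_eq[OF assms(2)] by auto
  hence "x \<notin> \<real>\<^sub>\<le>\<^sub>0" using assms(1) by (auto simp: complex_nonpos_Reals_iff)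
  thus "((\<lambda>z. z powr (-s)) has_field_derivative (-s * x powr (-s - 1)))
          (at x within closed_segment (of_real a) (of_real b))"
    by (rule has_field_derivative_at_within[OF has_field_derivative_powr])
  have "norm (x powr (-s - 1)) = t powr (- Re s - 1)"
    using t assms(1) by (subst norm_powr_real_powr) auto
  also have "\<dots> \<le> a powr (- Re s - 1)"
    using t assms by (intro powr_mono2') auto
  finally show "norm (-s * x powr (-s - 1)) \<le> norm s * a powr (- Re s - 1)"
    unfolding norm_mult norm_minus_cancel by (rule mult_left_mono) simp
qed (rule ends_in_segment)

lemma norm_powr_second_difference_le:
  fixes s :: complex
  assumes "a > 0" "Re s \<ge> 0"
  shows "norm ((s - 1) * of_real a powr (-s) - of_real a powr (1 - s) + of_real (a + 1) powr (1 - s))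
           \<le> norm s * norm (s - 1) * a powr (- Re s - 1)"
proof -
  define S where "S = closed_segment (complex_of_real a) (of_real (a + 1))"
  define C where "C = norm s * a powr (- Re s - 1)"
  \<comment> \<open>The left-hand side is the increment of \<open>\<psi>\<close> over \<open>[a, a + 1]\<close>, and \<open>\<psi>'\<close> vanishes at \<open>a\<close>.\<close>
  define \<psi> where "\<psi> z = z powr (1 - s) - (1 - s) * of_real a powr (-s) * z" for z
  have S: "S = of_real ` {a..a + 1}" unfolding S_def by (rule closed_segment_of_real_eq) simp
  have "norm (\<psi> (of_real (a + 1)) - \<psi> (of_real a)) \<le> (norm (1 - s) * C) * norm (complex_of_real (a + 1) - of_real a)"
  proof (rule field_differentiable_bound[of S])
    fix x assume "x \<in> S"
    then obtain t where t: "x = of_real t" "a \<le> t" "t \<le> a + 1" using S by auto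
    hence "x \<notin> \<real>\<^sub>\<le>\<^sub>0" using assms(1) by (auto simp: complex_nonpos_Reals_iff)
    hence "(\<psi> has_field_derivative ((1 - s) * x powr (1 - s - 1) - (1 - s) * of_real a powr (-s))) (at x)"
      unfolding \<psi>_def by (auto intro!: derivative_eq_intros has_field_derivative_powr)
    thus "(\<psi> has_field_derivative ((1 - s) * (x powr (-s) - of_real a powr (-s)))) (at x within S)"
      by (rule has_field_derivative_at_within[OF DERIV_cong]) (simp add: algebra_simps)
    have "norm (x powr (-s) - of_real a powr (-s)) \<le> C * norm (x - of_real a)"
      unfolding C_def using assms \<open>x \<in> S\<close> by (intro norm_powr_minus_diff_le[of a "a + 1"]) (auto simp: S_def)
    also have "\<dots> \<le> C * 1"
      using t by (intro mult_left_mono) (auto simp: C_def norm_of_real simp flip: of_real_diff)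
    finally have "norm (x powr (-s) - of_real a powr (-s)) \<le> C" by simp
    thus "norm ((1 - s) * (x powr (-s) - of_real a powr (-s))) \<le> norm (1 - s) * C"
      unfolding norm_mult by (rule mult_left_mono) simp
  qed (auto simp: S_def)
  also have "\<psi> (of_real (a + 1)) - \<psi> (of_real a) =
             (s - 1) * of_real a powr (-s) - of_real a powr (1 - s) + of_real (a + 1) powr (1 - s)"
    unfolding \<psi>_def by (simp add: algebra_simps)
  finally show ?thesis by (simp add: C_def norm_minus_commute mult_ac flip: of_real_diff)
qed

definition zeta_remainder_term :: "nat \<Rightarrow> complex \<Rightarrow> complex" where
  "zeta_remainder_term n s = (s - 1) * of_nat (Suc n) powr (-s) - of_nat (Suc n) powr (1 - s)
                               + of_nat (Suc (Suc n)) powr (1 - s)"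

definition zeta_remainder :: "complex \<Rightarrow> complex" where
  "zeta_remainder s = (\<Sum>n. zeta_remainder_term n s)"

lemma norm_zeta_remainder_term_le:
  assumes "Re s \<ge> 0"
  shows "norm (zeta_remainder_term n s) \<le> norm s * norm (s - 1) * real (Suc n) powr (- Re s - 1)"
  using norm_powr_second_difference_le[of "real (Suc n)" s] assms
  by (simp add: zeta_remainder_term_def add_ac)

lemma holomorphic_zeta_remainder: "zeta_remainder holomorphic_on {s. Re s > 0}"
  unfolding zeta_remainder_def[abs_def]
proof (rule holomorphic_on_suminf)
  show "open {s. Re s > 0}" by (rule open_halfspace_Re_gt)
  show "zeta_remainder_term n holomorphic_on {s. Re s > 0}" for n
    unfolding zeta_remainder_term_def[abs_def] by (intro holomorphic_intros)
  fix z assume "z \<in> {s. Re s > (0::real)}"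
  hence z: "Re z > 0" by simp
  define r where "r = Re z / 2"
  define C where "C = (norm z + r) * (norm z + r + 1)"
  have r: "r > 0" using z by (simp add: r_def)
  have Re_w: "Re w \<ge> r" if "w \<in> cball z r" for w
    using Re_ge_of_mem_cball[OF that] by (simp add: r_def)
  have "norm (zeta_remainder_term n w) \<le> C * real (Suc n) powr (- r - 1)" if w: "w \<in> cball z r" for n w
  proof -
    have "norm (zeta_remainder_term n w) \<le> norm w * norm (w - 1) * real (Suc n) powr (- Re w - 1)"
      using Re_w[OF w] z by (intro norm_zeta_remainder_term_le) (simp add: r_def)
    also have "\<dots> \<le> C * real (Suc n) powr (- r - 1)"
      unfolding C_def using norm_le_of_mem_cball[OF w] norm_triangle_ineq4[of w 1] Re_w[OF w] r
      by (intro mult_mono powr_mono) auto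
    finally show ?thesis .
  qed
  moreover have "summable (\<lambda>n. C * real (Suc n) powr (- r - 1))"
  proof (intro summable_mult)
    have "summable (\<lambda>n. real n powr (- r - 1))" using r by (simp add: summable_real_powr_iff)
    thus "summable (\<lambda>n. real (Suc n) powr (- r - 1))" by (subst summable_Suc_iff)
  qed
  moreover have "cball z r \<subseteq> {s. Re s > 0}" using r Re_w by fastforce
  ultimately show "\<exists>r>0. cball z r \<subseteq> {s. Re s > 0} \<and>
      (\<exists>M. summable M \<and> (\<forall>n. \<forall>w\<in>cball z r. norm (zeta_remainder_term n w) \<le> M n))"
    using r by blast
qed

lemma zeta_remainder_eq:
  assumes "Re s > 1"
  shows "zeta_remainder s = (s - 1) * zeta_dirichlet s - 1"
proof -
  define f where "f n = (of_nat n powr (-s) :: complex)" for n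
  have "summable (\<lambda>n. norm (f n))"
    using assms by (simp add: f_def norm_of_nat_powr summable_real_powr_iff)
  moreover have "zeta_dirichlet s = (\<Sum>n. f n)"
    unfolding zeta_dirichlet_def f_def by (intro suminf_cong) (simp add: powr_minus_divide)
  ultimately have "f sums zeta_dirichlet s"
    by (simp add: summable_norm_cancel summable_sums)
  hence "(\<lambda>n. f (Suc n)) sums zeta_dirichlet s"
    by (subst sums_Suc_iff) (simp add: f_def)
  hence "(\<lambda>n. (s - 1) * of_nat (Suc n) powr (-s)) sums ((s - 1) * zeta_dirichlet s)"
    unfolding f_def by (rule sums_mult)
  moreover have "(\<lambda>n. of_nat (Suc (Suc n)) powr (1 - s) - of_nat (Suc n) powr (1 - s)) sums (0 - 1 :: complex)"
  proof -
    have "(\<lambda>n. of_nat (Suc n) powr (1 - s) :: complex) \<longlonglongrightarrow> 0"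
      using assms by (intro tendsto_neg_powr_complex_of_nat filterlim_Suc) simp
    from telescope_sums[OF this] show ?thesis by simp
  qed
  ultimately have "(\<lambda>n. zeta_remainder_term n s) sums ((s - 1) * zeta_dirichlet s + (0 - 1))"
    unfolding zeta_remainder_term_def by (rule sums_add[THEN sums_cong[THEN iffD1, rotated]]) (simp add: algebra_simps)
  thus ?thesis by (simp add: zeta_remainder_def sums_iff)
qed

lemma zeta_remainder_1: "zeta_remainder 1 = 0"
  by (simp add: zeta_remainder_def zeta_remainder_term_def del: of_nat_Suc)

section \<open>The quotient by a power of zeta\<close>

lemma norm_one_minus_power_minus_one_le:
  fixes w :: "'a::real_normed_field"
  assumes "norm w \<le> 1"
  shows "norm ((1 - w) ^ j - 1) \<le> real j * 2 ^ j * norm w"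
proof (induction j)
  case (Suc j)
  have "norm ((1 - w) ^ Suc j - 1) = norm ((1 - w) * ((1 - w) ^ j - 1) - w)"
    by (simp add: algebra_simps)
  also have "\<dots> \<le> norm (1 - w) * norm ((1 - w) ^ j - 1) + norm w"
    by (metis norm_mult norm_triangle_ineq4)
  also have "\<dots> \<le> 2 * (real j * 2 ^ j * norm w) + norm w"
    using norm_triangle_ineq4[of 1 w] assms by (intro add_right_mono mult_mono Suc.IH) auto
  also have "\<dots> \<le> real (Suc j) * 2 ^ Suc j * norm w"
    using mult_right_mono[OF one_le_power[of "2::real" "Suc j"] norm_ge_zero[of w]]
    by (simp add: algebra_simps)
  finally show ?case .
qed simp

definition D_zeta_factor :: "nat \<Rightarrow> nat \<Rightarrow> complex \<Rightarrow> nat \<Rightarrow> complex" where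
  "D_zeta_factor k H s n =
     (if prime n then D_euler_factor k H s n * (1 - of_nat n powr (-s)) ^ (k - 1) else 1)"

definition D_zeta_quotient :: "nat \<Rightarrow> nat \<Rightarrow> complex \<Rightarrow> complex" where
  "D_zeta_quotient k H s = (\<Prod>n. D_zeta_factor k H s n)"

lemma norm_D_zeta_factor_minus_1_le:
  assumes "H > 0" "n > H" "Re s \<ge> 1/2"
  shows "norm (D_zeta_factor k H s n - 1) \<le> real (k - 1) * 2 ^ (k - 1) * real n powr (-3/2)"
proof (cases "prime n")
  case True
  define x where "x = (of_nat n powr (-s) :: complex)"
  have n: "n > 1" using prime_gt_1_nat[OF True] .
  have "\<not> n dvd H" using assms by (auto dest: dvd_imp_le)
  have norm_x: "norm x \<le> real n powr (-1/2)"
    unfolding x_def norm_of_nat_powr using n assms(3) by (intro powr_mono) auto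
  also have "\<dots> < 1" using n by (intro powr_less_one) auto
  finally have "norm x < 1" .
  hence "1 - x \<noteq> 0" by auto
  have "D_zeta_factor k H s n = ((1 - 1 / of_nat n) * (1 / (1 - x)) ^ (k - 1) + 1 / of_nat n) * (1 - x) ^ (k - 1)"
    using True \<open>\<not> n dvd H\<close> assms(3) by (simp add: D_zeta_factor_def D_euler_factor_coprime x_def)
  also have "\<dots> = 1 + ((1 - x) ^ (k - 1) - 1) / of_nat n"
    using \<open>1 - x \<noteq> 0\<close> n by (simp add: field_simps power_divide)
  finally have "norm (D_zeta_factor k H s n - 1) = norm ((1 - x) ^ (k - 1) - 1) / real n"
    by (simp add: norm_divide)
  also have "\<dots> \<le> real (k - 1) * 2 ^ (k - 1) * norm x / real n"
    using \<open>norm x < 1\<close> by (intro divide_right_mono norm_one_minus_power_minus_one_le) auto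
  also have "\<dots> \<le> real (k - 1) * 2 ^ (k - 1) * real n powr (-1/2) / real n"
    by (intro divide_right_mono mult_left_mono norm_x) auto
  also have "\<dots> = real (k - 1) * 2 ^ (k - 1) * real n powr (-1/2 - 1)"
    using n by (subst powr_diff) auto
  finally show ?thesis by simp
qed (simp add: D_zeta_factor_def)

lemma summable_D_zeta_factor_bound:
  "summable (\<lambda>n. real (k - 1) * 2 ^ (k - 1) * real n powr (-3/2))"
  by (intro summable_mult) (simp add: summable_real_powr_iff)

lemma convergent_prod_D_zeta_factor:
  assumes "H > 0" "Re s \<ge> 1/2"
  shows "convergent_prod (\<lambda>n. D_zeta_factor k H s n)"
proof -
  have "summable (\<lambda>n. norm (D_zeta_factor k H s n - 1))"
  proof (rule summable_comparison_test_ev[OF _ summable_D_zeta_factor_bound])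
    show "\<forall>\<^sub>F n in sequentially. norm (norm (D_zeta_factor k H s n - 1)) \<le>
            real (k - 1) * 2 ^ (k - 1) * real n powr (-3/2)"
      using eventually_gt_at_top[of H]
      by eventually_elim (use norm_D_zeta_factor_minus_1_le assms in auto)
  qed
  thus ?thesis by (intro abs_convergent_prod_imp_convergent_prod summable_imp_abs_convergent_prod)
qed

lemma holomorphic_D_zeta_factor:
  assumes "H > 0"
  shows "(\<lambda>s. D_zeta_factor k H s n) holomorphic_on {s. Re s > 0}"
proof (cases "prime n")
  case True
  thus ?thesis using holomorphic_D_euler_factor[OF assms True]
    by (simp add: D_zeta_factor_def holomorphic_intros)
qed (simp add: D_zeta_factor_def)

lemma holomorphic_D_zeta_quotient:
  assumes "H > 0"
  shows "D_zeta_quotient k H holomorphic_on {s. Re s > 1/2}"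
  unfolding D_zeta_quotient_def[abs_def]
proof (rule holomorphic_on_prodinf)
  show "open {s. Re s > (1/2 :: real)}" by (rule open_halfspace_Re_gt)
  show "(\<lambda>s. D_zeta_factor k H s n) holomorphic_on {s. Re s > 1/2}" for n
    by (rule holomorphic_on_subset[OF holomorphic_D_zeta_factor[OF assms]]) auto
  fix z assume "z \<in> {s. Re s > (1/2 :: real)}"
  hence z: "Re z > 1/2" by simp
  define r where "r = (Re z - 1/2) / 2"
  have Re_w: "Re w > 1/2" if "w \<in> cball z r" for w
    using Re_ge_of_mem_cball[OF that] z unfolding r_def by (simp add: field_simps)
  have "\<forall>\<^sub>F n in sequentially. \<forall>w\<in>cball z r. norm (D_zeta_factor k H w n - 1) \<le>
          real (k - 1) * 2 ^ (k - 1) * real n powr (-3/2)"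
    using eventually_gt_at_top[of H]
    by eventually_elim (use Re_w norm_D_zeta_factor_minus_1_le assms in \<open>auto simp: less_imp_le\<close>)
  moreover have "r > 0" "cball z r \<subseteq> {s. Re s > 1/2}" using z Re_w by (auto simp: r_def)
  ultimately show "\<exists>r>0. cball z r \<subseteq> {s. Re s > 1/2} \<and> (\<exists>M. summable M \<and>
          (\<forall>\<^sub>F n in sequentially. \<forall>w\<in>cball z r. norm (D_zeta_factor k H w n - 1) \<le> M n))"
    using summable_D_zeta_factor_bound by blast
qed

lemma D_zeta_quotient_1_nonzero:
  assumes "H > 0"
  shows "D_zeta_quotient k H 1 \<noteq> 0"
  unfolding D_zeta_quotient_def
proof (rule prodinf_nonzero)
  show "convergent_prod (\<lambda>n. D_zeta_factor k H 1 n)"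
    by (rule convergent_prod_D_zeta_factor[OF assms]) simp
  fix n show "D_zeta_factor k H 1 n \<noteq> 0"
  proof (cases "prime n")
    case True
    have "D_euler_factor k H 1 n \<noteq> 0"
      using Re_D_euler_factor_1_ge_1[OF assms True, of k] by auto
    moreover have "of_nat n powr (-1) \<noteq> (1 :: complex)"
      using prime_gt_1_nat[OF True] by (simp add: powr_minus)
    ultimately show ?thesis using True by (simp add: D_zeta_factor_def)
  qed (simp add: D_zeta_factor_def)
qed

lemma D_zeta_quotient_eq:
  assumes "h > 0" "Re s > 1"
  shows "D_zeta_quotient k (nat h) s = D_series k h s / zeta_dirichlet s ^ (k - 1)"
proof -
  define M where "M = (\<Prod>n. if prime n then 1 - of_nat n powr (-s) else 1 :: complex)"
  have M: "M * zeta_dirichlet s = 1" unfolding M_def by (rule zeta_dirichlet_mult_prodinf[OF assms(2)])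
  have "(\<lambda>N. (\<Prod>p | prime p \<and> p < N. D_euler_factor k (nat h) s p) *
             (\<Prod>p | prime p \<and> p < N. 1 - of_nat p powr (-s)) ^ (k - 1)) \<longlonglongrightarrow> D_series k h s * M ^ (k - 1)"
    unfolding M_def
    by (rule tendsto_mult[OF D_euler_product[OF assms] tendsto_power[OF LIMSEQ_prod_primes_less[OF
          convergent_prod_zeta_inverse_factors[OF assms(2)]]]])
  moreover have "(\<lambda>N. (\<Prod>p | prime p \<and> p < N. D_euler_factor k (nat h) s p) *
             (\<Prod>p | prime p \<and> p < N. 1 - of_nat p powr (-s)) ^ (k - 1)) \<longlonglongrightarrow> D_zeta_quotient k (nat h) s"
  proof -
    have "convergent_prod (\<lambda>n. if prime n then D_euler_factor k (nat h) s n * (1 - of_nat n powr (-s)) ^ (k - 1) else 1)"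
      using convergent_prod_D_zeta_factor[of "nat h" s k] assms by (simp add: D_zeta_factor_def[abs_def])
    from LIMSEQ_prod_primes_less[OF this] show ?thesis
      by (simp add: D_zeta_quotient_def D_zeta_factor_def[abs_def] prod.distrib prod_power_distrib)
  qed
  ultimately have "D_zeta_quotient k (nat h) s = D_series k h s * M ^ (k - 1)"
    by (rule LIMSEQ_unique[rotated])
  also have "M = inverse (zeta_dirichlet s)"
    using inverse_unique[of "zeta_dirichlet s" M] M by (simp add: mult.commute)
  finally show ?thesis by (simp add: power_inverse divide_inverse)
qed

definition D_continuation :: "nat \<Rightarrow> nat \<Rightarrow> complex \<Rightarrow> complex" where
  "D_continuation k H s = D_zeta_quotient k H s * (1 + zeta_remainder s) ^ (k - 1) / (s - 1) ^ (k - 1)"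

lemma D_continuation_numerator:
  assumes "H > 0"
  shows "(\<lambda>s. D_zeta_quotient k H s * (1 + zeta_remainder s) ^ (k - 1)) holomorphic_on {s. Re s > 1/2}"
    and "D_zeta_quotient k H 1 * (1 + zeta_remainder 1) ^ (k - 1) \<noteq> 0"
proof -
  have "zeta_remainder holomorphic_on {s. Re s > 1/2}"
    by (rule holomorphic_on_subset[OF holomorphic_zeta_remainder]) auto
  thus "(\<lambda>s. D_zeta_quotient k H s * (1 + zeta_remainder s) ^ (k - 1)) holomorphic_on {s. Re s > 1/2}"
    using holomorphic_D_zeta_quotient[OF assms] by (intro holomorphic_intros)
  show "D_zeta_quotient k H 1 * (1 + zeta_remainder 1) ^ (k - 1) \<noteq> 0"
    using D_zeta_quotient_1_nonzero[OF assms] by (simp add: zeta_remainder_1)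
qed

lemma holomorphic_D_continuation:
  assumes "H > 0"
  shows "D_continuation k H holomorphic_on {s. Re s > 1/2} - {1}"
  unfolding D_continuation_def[abs_def]
  by (intro holomorphic_intros holomorphic_on_subset[OF D_continuation_numerator(1)[OF assms]]) auto

lemma D_continuation_eq:
  assumes "h > 0" "Re s > 1"
  shows "D_continuation k (nat h) s = D_series k h s"
proof -
  have "s \<noteq> 1" "zeta_dirichlet s \<noteq> 0"
    using assms(2) zeta_dirichlet_mult_prodinf[OF assms(2)] by auto
  have "D_continuation k (nat h) s =
        D_zeta_quotient k (nat h) s * ((s - 1) * zeta_dirichlet s) ^ (k - 1) / (s - 1) ^ (k - 1)"
    using zeta_remainder_eq[OF assms(2)] by (simp add: D_continuation_def)
  also have "\<dots> = D_zeta_quotient k (nat h) s * zeta_dirichlet s ^ (k - 1)"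
    using \<open>s \<noteq> 1\<close> by (simp add: power_mult_distrib)
  also have "\<dots> = D_series k h s"
    using \<open>zeta_dirichlet s \<noteq> 0\<close> D_zeta_quotient_eq[OF assms] by simp
  finally show ?thesis .
qed

lemma D_continuation_pole:
  assumes "H > 0" "k \<ge> 2"
  shows "is_pole (D_continuation k H) 1" and "zorder (D_continuation k H) 1 = - int (k - 1)"
proof -
  note numerator = D_continuation_numerator[OF assms(1)]
  show "is_pole (D_continuation k H) 1"
    unfolding D_continuation_def[abs_def] using assms(2)
    by (intro is_pole_basic[OF numerator(1) open_halfspace_Re_gt _ numerator(2)]) auto
  show "zorder (D_continuation k H) 1 = - int (k - 1)"
  proof (rule zorder_eqI[OF open_halfspace_Re_gt _ numerator])
    show "D_continuation k H w = D_zeta_quotient k H w * (1 + zeta_remainder w) ^ (k - 1) * (w - 1) powi (- int (k - 1))" for w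
      unfolding D_continuation_def by (simp add: power_int_minus divide_inverse)
  qed simp
qed

theorem mainTheorem10:
  fixes k :: nat and h :: int
  assumes "k \<ge> 2" and "h > 0"
  shows "(\<forall>s. Re s > 1 \<longrightarrow> summable (\<lambda>m. norm (D_term k h s m)))
    \<and> (\<exists>F. F holomorphic_on {s. Re s > 1/2} \<and> F 1 \<noteq> 0 \<and>
          (\<forall>s. Re s > 1 \<longrightarrow> F s = D_series k h s / zeta_dirichlet s ^ (k - 1)))
    \<and> (\<exists>G. G holomorphic_on ({s. Re s > 1/2} - {1}) \<and>
          (\<forall>s. Re s > 1 \<longrightarrow> G s = D_series k h s) \<and>
          is_pole G 1 \<and> zorder G 1 = - int (k - 1))"
proof (intro conjI)
  have H: "nat h > 0" using assms(2) by simp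
  show "\<forall>s. Re s > 1 \<longrightarrow> summable (\<lambda>m. norm (D_term k h s m))"
    using summable_norm_D_term[OF assms(2)] by simp
  show "\<exists>F. F holomorphic_on {s. Re s > 1/2} \<and> F 1 \<noteq> 0 \<and>
          (\<forall>s. Re s > 1 \<longrightarrow> F s = D_series k h s / zeta_dirichlet s ^ (k - 1))"
    using holomorphic_D_zeta_quotient[OF H] D_zeta_quotient_1_nonzero[OF H] D_zeta_quotient_eq[OF assms(2)]
    by (intro exI[of _ "D_zeta_quotient k (nat h)"]) simp
  show "\<exists>G. G holomorphic_on ({s. Re s > 1/2} - {1}) \<and> (\<forall>s. Re s > 1 \<longrightarrow> G s = D_series k h s) \<and>
          is_pole G 1 \<and> zorder G 1 = - int (k - 1)"
    using holomorphic_D_continuation[OF H] D_continuation_eq[OF assms(2)] D_continuation_pole[OF H assms(1)]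
    by (intro exI[of _ "D_continuation k (nat h)"]) simp
qed

end
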